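(* There exists a universal constant $C<\infty$ such that the following holds. Let $G=(V,E)$ be an infinite, connected, locally finite graph (multiple edges allowed, no self-loops), let $v\in V$ have degree $d_v$, and let $(X_t)$ be simple random walk on $G$ with $X_0=v$. Then for every integer $t\geq 1$, $$\mathbb{P}_v(\tau_v = t \mid \tau_v\geq t) \leq \frac{C\log(d_v t)}{t}.$$
   Context: For a vertex $u$, $\tau_u=\min\{t\geq 1: X_t=u\}$; when $X_0=v$, $\tau_v$ is the return time to $v$. $\mathbb{P}_v$ denotes the law of simple random walk started at $v$. *)

theory Defs
  imports Complex_Main
begin

text \<open>A multigraph on vertex set nat is given by an edge-multiplicity function
  m u w = number of edges between u and w.\<close>

definition multigraph_ok :: "(nat \<Rightarrow> nat \<Rightarrow> nat) \<Rightarrow> bool" where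
  "multigraph_ok m \<longleftrightarrow>
     (\<forall>u w. m u w = m w u) \<and>
     (\<forall>u. m u u = 0) \<and>
     (\<forall>u. finite {w. 0 < m u w}) \<and>
     (\<forall>u w. (u, w) \<in> {(a, b). 0 < m a b}\<^sup>*)"

definition deg :: "(nat \<Rightarrow> nat \<Rightarrow> nat) \<Rightarrow> nat \<Rightarrow> nat" where
  "deg m u = (\<Sum>w\<in>{w. 0 < m u w}. m u w)"

definition walk_prob :: "(nat \<Rightarrow> nat \<Rightarrow> nat) \<Rightarrow> nat list \<Rightarrow> real" where
  "walk_prob m xs = (\<Prod>i<length xs - 1. real (m (xs!i) (xs!Suc i)) / real (deg m (xs!i)))"

definition is_walk :: "(nat \<Rightarrow> nat \<Rightarrow> nat) \<Rightarrow> nat list \<Rightarrow> bool" where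
  "is_walk m xs \<longleftrightarrow> (\<forall>i. Suc i < length xs \<longrightarrow> 0 < m (xs!i) (xs!Suc i))"

text \<open>P_v(tau_v >= t): paths X_0 = v, X_1, ..., X_(t-1) with X_i \<noteq> v for 1 \<le> i \<le> t-1.\<close>
definition prob_ret_ge :: "(nat \<Rightarrow> nat \<Rightarrow> nat) \<Rightarrow> nat \<Rightarrow> nat \<Rightarrow> real" where
  "prob_ret_ge m v t = (\<Sum>xs\<in>{xs. length xs = t \<and> xs!0 = v \<and> is_walk m xs \<and>
       (\<forall>i. 1 \<le> i \<and> i < t \<longrightarrow> xs!i \<noteq> v)}. walk_prob m xs)"

text \<open>P_v(tau_v = t): paths X_0 = v, ..., X_t with X_i \<noteq> v for 1 \<le> i < t and X_t = v.\<close>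
definition prob_ret_eq :: "(nat \<Rightarrow> nat \<Rightarrow> nat) \<Rightarrow> nat \<Rightarrow> nat \<Rightarrow> real" where
  "prob_ret_eq m v t = (\<Sum>xs\<in>{xs. length xs = Suc t \<and> xs!0 = v \<and> is_walk m xs \<and>
       (\<forall>i. 1 \<le> i \<and> i < t \<longrightarrow> xs!i \<noteq> v) \<and> xs!t = v}. walk_prob m xs)"

end

theory Submission
  imports Defs "HOL-Analysis.Convex"
begin

(* Write c n and Z n for deg v times P_v(\<tau>_v = n + 2) and P_v(\<tau>_v \<ge> n + 2). Let K be the
   transition operator of the walk killed at v and r_j = K^j applied to the indicator of v
   (the probability of first hitting v at time j). Conditioning on the first step and using
   reversibility, c (a + b) = <r_(a+1), r_(b+1)> for the inner product weighted by degrees. Since K is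
   a self-adjoint contraction, the even terms c (2j) = |r_(j+1)|^2 are nonincreasing and log-convex,
   odd terms are dominated by even ones, and c 0 \<le> deg v. Moreover Z n \<ge> 1/(2(n+1)): the
   probability of hitting v within n steps drops from 1 to 0 along a geodesic of length n + 1 (which
   exists since the graph is infinite), and its Dirichlet energy is at most 2 Z n. *)

lemma ln2_ge_half: "1/2 \<le> ln (2::real)"
proof -
  have "exp (1/2::real) ^ 2 = exp 1" by (simp add: power2_eq_square flip: exp_add)
  also have "\<dots> \<le> 2 ^ 2" using exp_le by simp
  finally have "exp (1/2::real) \<le> 2" by (rule power2_le_imp_le) simp
  then show ?thesis using ln_ge_iff[of 2 "1/2"] by simp
qed

(* For a nonnegative, nonincreasing, log-convex sequence the ratios e (j+1) / e j are
   nondecreasing; in cross-multiplied form this survives zero terms. *)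
lemma log_convex_cross:
  fixes e :: "nat \<Rightarrow> real"
  assumes nonneg: "\<And>j. 0 \<le> e j" and noninc: "\<And>j. e (Suc j) \<le> e j"
    and log_convex: "\<And>j. (e (Suc j))\<^sup>2 \<le> e j * e (Suc (Suc j))"
  shows "e (Suc a) * e (a + k) \<le> e a * e (Suc (a + k))"
proof (induction k)
  case 0
  show ?case by (simp add: mult.commute)
next
  case (Suc k)
  show ?case
  proof (cases "e (a + k) = 0")
    case True
    then have "e (Suc (a + k)) = 0" using noninc[of "a + k"] nonneg[of "Suc (a + k)"] by simp
    then show ?thesis using nonneg by simp
  next
    case False
    then have pos: "0 < e (a + k)" using nonneg[of "a + k"] by simp
    have "e (Suc a) * e (a + k) * e (Suc (a + k)) \<le> e a * (e (Suc (a + k)))\<^sup>2"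
      using mult_right_mono[OF Suc.IH nonneg] by (simp add: power2_eq_square mult.assoc)
    also have "\<dots> \<le> e a * (e (a + k) * e (Suc (Suc (a + k))))"
      by (rule mult_left_mono[OF log_convex nonneg])
    finally show ?thesis using pos by (simp add: mult_ac)
  qed
qed

lemma log_convex_geometric:
  fixes e :: "nat \<Rightarrow> real"
  assumes nonneg: "\<And>j. 0 \<le> e j" and noninc: "\<And>j. e (Suc j) \<le> e j"
    and log_convex: "\<And>j. (e (Suc j))\<^sup>2 \<le> e j * e (Suc (Suc j))"
    and pos: "0 < e k"
  defines "\<rho> \<equiv> e (Suc k) / e k"
  shows "0 \<le> \<rho>" and "\<rho> \<le> 1" and "e k * \<rho> ^ i \<le> e (k + i)" and "e k \<le> e 0 * \<rho> ^ k"
    and "real M * e k * \<rho> ^ M \<le> (\<Sum>i<M. e (Suc k + i))"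
proof -
  note cross = log_convex_cross[of e, OF nonneg noninc log_convex]
  show rho_nonneg: "0 \<le> \<rho>" unfolding \<rho>_def using nonneg pos by simp
  show rho_le: "\<rho> \<le> 1" unfolding \<rho>_def using noninc[of k] pos by simp
  show lower: "e k * \<rho> ^ i \<le> e (k + i)" for i
  proof (induction i)
    case (Suc i)
    have "\<rho> * e (k + i) \<le> e (Suc (k + i))"
      using cross[of k i] pos unfolding \<rho>_def by (simp add: field_simps)
    moreover have "\<rho> * (e k * \<rho> ^ i) \<le> \<rho> * e (k + i)"
      by (rule mult_left_mono[OF Suc.IH rho_nonneg])
    ultimately show ?case by (simp add: mult_ac)
  qed simp
  have "j \<le> k \<Longrightarrow> e j \<le> e 0 * \<rho> ^ j" for j
  proof (induction j)
    case (Suc j)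
    have "e (Suc j) * e k \<le> e j * e (Suc k)"
      using cross[of j "k - j"] Suc.prems by simp
    then have "e (Suc j) \<le> e j * \<rho>" unfolding \<rho>_def using pos by (simp add: field_simps)
    also have "\<dots> \<le> e 0 * \<rho> ^ j * \<rho>"
      using Suc mult_right_mono[OF _ rho_nonneg] by simp
    finally show ?case by (simp add: mult_ac)
  qed simp
  then show "e k \<le> e 0 * \<rho> ^ k" by simp
  have "e k * \<rho> ^ M \<le> e (Suc k + i)" if "i < M" for i
  proof -
    have "\<rho> ^ M \<le> \<rho> ^ Suc i" using that rho_nonneg rho_le by (intro power_decreasing) simp_all
    then have "e k * \<rho> ^ M \<le> e k * \<rho> ^ Suc i" using pos by simp
    also have "\<dots> \<le> e (Suc k + i)" using lower[of "Suc i"] by simp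
    finally show ?thesis .
  qed
  then have "(\<Sum>i<M. e k * \<rho> ^ M) \<le> (\<Sum>i<M. e (Suc k + i))" by (intro sum_mono) simp
  then show "real M * e k * \<rho> ^ M \<le> (\<Sum>i<M. e (Suc k + i))" by simp
qed

lemma dyadic_exponent:
  fixes y :: real
  assumes "2 \<le> y"
  obtains q :: nat where "0 < q" and "y ^ 3 \<le> 2 ^ q" and "real q \<le> 8 * ln y"
proof -
  define x where "x = 3 * ln y / ln 2"
  have "ln 2 \<le> ln y" using assms by simp
  then have ln_y: "1/2 \<le> ln y" using ln2_ge_half by linarith
  have x_pos: "0 < x" unfolding x_def using ln_y by simp
  define q where "q = nat \<lceil>x\<rceil>"
  have q_lo: "x \<le> real q" unfolding q_def using x_pos by linarith
  have q_hi: "real q \<le> x + 1" unfolding q_def using x_pos by linarith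
  have "x \<le> 6 * ln y"
    unfolding x_def using ln2_ge_half ln_y by (simp add: divide_le_eq)
  then have "real q \<le> 8 * ln y" using q_hi ln_y by simp
  moreover have "y ^ 3 \<le> 2 ^ q"
  proof -
    have "ln (y ^ 3) = 3 * ln y" using assms by (simp add: ln_realpow)
    also have "\<dots> \<le> real q * ln 2" using q_lo unfolding x_def by (simp add: divide_le_eq)
    also have "\<dots> = ln (2 ^ q)" by (simp add: ln_realpow)
    finally show ?thesis using assms by simp
  qed
  moreover have "0 < q" using q_lo x_pos by simp
  ultimately show ?thesis using that by blast
qed

lemma block_count:
  fixes L T :: real and k q :: nat
  assumes "0 < q" and "real q \<le> 8 * L" and "T \<le> 2 * real k + 3" and "64 * L \<le> T" and "1/2 \<le> L"
  shows "T \<le> 32 * L * real (k div q)"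
proof -
  have "k < (k div q + 1) * q" using assms(1) by (simp add: dividend_less_div_times)
  then have "real k < (real (k div q) + 1) * real q" by (metis of_nat_1 of_nat_add of_nat_less_iff of_nat_mult)
  also have "\<dots> \<le> (real (k div q) + 1) * (8 * L)" using assms(2) by (intro mult_left_mono) simp_all
  finally show ?thesis using assms(3-5) by (simp add: algebra_simps)
qed

lemma decayed_mass:
  fixes a \<rho> d T :: real and k q :: nat
  assumes rho: "0 \<le> \<rho>" "\<rho> \<le> 1" and d: "1 \<le> d" and T: "2 \<le> T"
    and a_le: "a \<le> d * \<rho> ^ k" and q: "(d * T) ^ 3 \<le> 2 ^ q" and small: "\<rho> ^ (k div q) < 1/2"
  shows "a \<le> 1 / T ^ 2"
proof -
  have "\<rho> ^ k \<le> \<rho> ^ (k div q * q)" using rho by (intro power_decreasing) simp_all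
  also have "\<dots> = (\<rho> ^ (k div q)) ^ q" by (simp add: power_mult)
  also have "\<dots> \<le> (1/2) ^ q" using small rho by (intro power_mono) simp_all
  finally have "d * \<rho> ^ k \<le> d * (1/2) ^ q" using d by simp
  then have "a \<le> d / 2 ^ q" using a_le by (simp add: power_one_over)
  also have "\<dots> \<le> d / (d * T) ^ 3" using q d T by (intro divide_left_mono) simp_all
  also have "\<dots> = 1 / (d ^ 2 * T ^ 3)" using d by (simp add: power3_eq_cube power2_eq_square)
  also have "\<dots> \<le> 1 / T ^ 2"
  proof (rule divide_left_mono)
    have "T ^ 2 \<le> T ^ 3" using T by (intro power_increasing) simp_all
    then have "1 * T ^ 2 \<le> d ^ 2 * T ^ 3" using d T by (intro mult_mono) (simp_all add: one_le_power)
    then show "T ^ 2 \<le> d ^ 2 * T ^ 3" by simp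
  qed (use d T in simp_all)
  finally show ?thesis .
qed

(* The numerical heart of the argument, with T = t the time and a = e k the current
   (even-indexed) return mass. Cut the k steps before the current time into blocks of length
   q \<approx> 3 log2 (dT). Either \<rho> stays above 1/2 over a block, so the tail Z collects about
   T / ln (dT) terms comparable to a, or the mass a has decayed below (dT)^-3 and is negligible
   compared to the a priori lower bound 1 / (2T) on Z. *)
lemma geometric_decay_bound:
  fixes x Z a \<rho> d T :: real and k :: nat
  assumes rho: "0 \<le> \<rho>" "\<rho> \<le> 1" and d: "1 \<le> d" and T: "2 \<le> T" "T \<le> 2 * real k + 3"
    and x_le: "x \<le> Z" "x \<le> a" and a_nonneg: "0 \<le> a" and a_le: "a \<le> d * \<rho> ^ k"
    and Z_geometric: "\<And>M. real M * a * \<rho> ^ M \<le> Z"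
    and Z_low: "1 / (2 * T) \<le> Z"
  shows "x \<le> 100 * ln (d * T) / T * Z"
proof -
  define L where "L = ln (d * T)"
  have dT: "2 \<le> d * T" using mult_mono[OF d T(1)] d by simp
  have "ln 2 \<le> L" unfolding L_def using dT by simp
  then have L: "1/2 \<le> L" using ln2_ge_half by linarith
  have "0 < 1 / (2 * T)" using T by simp
  then have Z_pos: "0 < Z" using Z_low by linarith
  have "a \<le> 100 * L / T * Z" if large_T: "64 * L \<le> T"
  proof -
    obtain q where q: "0 < q" "(d * T) ^ 3 \<le> 2 ^ q" "real q \<le> 8 * L"
      using dyadic_exponent[OF dT] unfolding L_def by blast
    define M where "M = k div q"
    have M_big: "T \<le> 32 * L * real M" unfolding M_def using q large_T T L by (intro block_count)
    show ?thesis
    proof (cases "1/2 \<le> \<rho> ^ M")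
      case True
      have "1 \<le> 100 * L / T * (real M / 2)" using M_big T L by (simp add: field_simps)
      then have "a * 1 \<le> a * (100 * L / T * (real M / 2))"
        using a_nonneg by (rule mult_left_mono)
      then have "a \<le> 100 * L / T * (real M * a * (1/2))" by (simp add: mult_ac)
      also have "\<dots> \<le> 100 * L / T * (real M * a * \<rho> ^ M)"
        using True a_nonneg L T by (intro mult_left_mono) simp_all
      also have "\<dots> \<le> 100 * L / T * Z"
        using Z_geometric L T by (intro mult_left_mono) simp_all
      finally show ?thesis .
    next
      case False
      have "a \<le> 1 / T ^ 2"
        using False q(2) rho d T(1) a_le unfolding M_def by (intro decayed_mass) (simp_all add: not_le)
      also have "\<dots> \<le> 100 * L / T * (1 / (2 * T))"
        using L T by (simp add: field_simps power2_eq_square)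
      also have "\<dots> \<le> 100 * L / T * Z" using Z_low L T by (intro mult_left_mono) simp_all
      finally show ?thesis .
    qed
  qed
  moreover have "Z \<le> 100 * L / T * Z" if "T < 64 * L"
  proof -
    have "1 \<le> 100 * L / T" using that T by (simp add: field_simps)
    then have "1 * Z \<le> 100 * L / T * Z" using Z_pos by (intro mult_right_mono) simp_all
    then show ?thesis by simp
  qed
  ultimately show ?thesis using x_le unfolding L_def by (cases "T < 64 * L") force+
qed

lemma tail_sum_bounds:
  fixes c Z :: "nat \<Rightarrow> real"
  assumes c_nonneg: "\<And>j. 0 \<le> c j" and Z_step: "\<And>j. Z j = Z (Suc j) + c j"
    and Z_nonneg: "\<And>j. 0 \<le> Z j"
  shows "i \<le> j \<Longrightarrow> Z j \<le> Z i" and "(\<Sum>i<M. c (2 * (j + i))) \<le> Z (2 * j)"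
proof -
  have "Z (Suc j) \<le> Z j" for j using Z_step[of j] c_nonneg[of j] by linarith
  then show "i \<le> j \<Longrightarrow> Z j \<le> Z i" by (rule lift_Suc_antimono_le)
  show "(\<Sum>i<M. c (2 * (j + i))) \<le> Z (2 * j)"
  proof (induction M arbitrary: j)
    case (Suc M)
    have "(\<Sum>i<Suc M. c (2 * (j + i))) = c (2 * j) + (\<Sum>i<M. c (2 * (Suc j + i)))"
      by (simp add: sum.lessThan_Suc_shift del: sum.lessThan_Suc)
    also have "\<dots> \<le> c (2 * j) + Z (2 * Suc j)" using Suc.IH[of "Suc j"] by simp
    also have "\<dots> \<le> Z (2 * j)"
      using Z_step[of "2 * j"] Z_step[of "Suc (2 * j)"] c_nonneg[of "Suc (2 * j)"] by simp
    finally show ?case .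
  qed (simp add: Z_nonneg)
qed

lemma ratio_bound_log_convex:
  fixes c Z :: "nat \<Rightarrow> real" and d :: real and n :: nat
  assumes c_nonneg: "\<And>j. 0 \<le> c j"
    and even_noninc: "\<And>j. c (2*j+2) \<le> c (2*j)"
    and even_log_convex: "\<And>j. (c (2*j+2))\<^sup>2 \<le> c (2*j) * c (2*j+4)"
    and odd_le_even: "\<And>j. c (2*j+1) \<le> c (2*j)"
    and c0: "c 0 \<le> d" and d: "1 \<le> d"
    and Z_step: "\<And>j. Z j = Z (Suc j) + c j"
    and Z_nonneg: "\<And>j. 0 \<le> Z j"
    and Z_low: "1 / (2 * real (Suc n)) \<le> Z n"
  shows "c n / Z n \<le> 100 * ln (d * real (n+2)) / real (n+2)"
proof -
  define e where "e j = c (2*j)" for j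
  define k where "k = n div 2"
  define T where "T = real (n+2)"
  have e_nonneg: "0 \<le> e j" for j unfolding e_def by (rule c_nonneg)
  have e_noninc: "e (Suc j) \<le> e j" for j unfolding e_def using even_noninc[of j] by simp
  have e_log_convex: "(e (Suc j))\<^sup>2 \<le> e j * e (Suc (Suc j))" for j
    unfolding e_def using even_log_convex[of j] by (simp add: numeral_eq_Suc)
  have cn_le: "c n \<le> e k"
  proof (cases "even n")
    case False
    then have "n = 2 * k + 1" unfolding k_def by simp
    then show ?thesis using odd_le_even[of k] unfolding e_def by simp
  qed (simp add: e_def k_def)
  note Z_noninc = tail_sum_bounds(1)[of c Z, OF c_nonneg Z_step Z_nonneg]
  have Z_tail: "(\<Sum>i<M. e (j + i)) \<le> Z (2*j)" for M j
    unfolding e_def by (rule tail_sum_bounds(2)[of c Z, OF c_nonneg Z_step Z_nonneg])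
  have Z_ge_c: "c n \<le> Z n" using Z_step[of n] Z_nonneg[of "Suc n"] by simp
  have "1 / (2 * T) \<le> 1 / (2 * real (Suc n))" unfolding T_def by (simp add: frac_le)
  then have Z_low': "1 / (2 * T) \<le> Z n" using Z_low by linarith
  have "0 < 1 / (2 * T)" unfolding T_def by simp
  then have Z_pos: "0 < Z n" using Z_low' by linarith
  have "c n \<le> 100 * ln (d * T) / T * Z n"
  proof (cases "e k = 0")
    case True
    have "1 \<le> d * T" using mult_mono[OF d, of 1 T] d unfolding T_def by simp
    then show ?thesis using True cn_le c_nonneg[of n] Z_pos unfolding T_def by simp
  next
    case False
    then have pos: "0 < e k" using e_nonneg[of k] by simp
    define \<rho> where "\<rho> = e (Suc k) / e k"
    note geo = log_convex_geometric[of e k, OF e_nonneg e_noninc e_log_convex pos, folded \<rho>_def]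
    have Z_geometric: "real M * e k * \<rho> ^ M \<le> Z n" for M
    proof -
      have "real M * e k * \<rho> ^ M \<le> (\<Sum>i<M. e (Suc k + i))" by (rule geo(5))
      also have "\<dots> \<le> Z (2 * Suc k)" by (rule Z_tail)
      also have "\<dots> \<le> Z n" by (rule Z_noninc) (simp add: k_def)
      finally show ?thesis .
    qed
    show ?thesis
    proof (rule geometric_decay_bound[OF geo(1,2) d])
      show "2 \<le> T" "T \<le> 2 * real k + 3" unfolding T_def k_def by linarith+
      have "e 0 * \<rho> ^ k \<le> d * \<rho> ^ k" using c0 geo(1) unfolding e_def by (simp add: mult_right_mono)
      then show "e k \<le> d * \<rho> ^ k" using geo(4) by linarith
    qed (simp_all only: Z_ge_c cn_le e_nonneg Z_geometric Z_low')
  qed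
  then show ?thesis using Z_pos unfolding T_def by (simp add: pos_divide_le_eq mult.commute)
qed

definition nbrs :: "(nat \<Rightarrow> nat \<Rightarrow> nat) \<Rightarrow> nat \<Rightarrow> nat set" where
  "nbrs m x = {y. 0 < m x y}"

definition step_prob :: "(nat \<Rightarrow> nat \<Rightarrow> nat) \<Rightarrow> nat \<Rightarrow> nat \<Rightarrow> real" where
  "step_prob m x y = real (m x y) / real (deg m x)"

fun graph_ball :: "(nat \<Rightarrow> nat \<Rightarrow> nat) \<Rightarrow> nat \<Rightarrow> nat \<Rightarrow> nat set" where
  "graph_ball m v 0 = {v}"
| "graph_ball m v (Suc n) = graph_ball m v n \<union> (\<Union>x\<in>graph_ball m v n. nbrs m x)"

(* A path p 0 = v, ..., p (n+1) that leaves the ball of radius j exactly at step j + 1;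
   such a path realises the distance from v to a vertex on the sphere of radius n + 1. *)
definition geodesic :: "(nat \<Rightarrow> nat \<Rightarrow> nat) \<Rightarrow> nat \<Rightarrow> nat \<Rightarrow> (nat \<Rightarrow> nat) \<Rightarrow> bool" where
  "geodesic m v n p \<longleftrightarrow> p 0 = v \<and> (\<forall>j\<le>n. 0 < m (p j) (p (Suc j)))
     \<and> (\<forall>j\<le>Suc n. p j \<in> graph_ball m v j) \<and> (\<forall>j\<le>n. p (Suc j) \<notin> graph_ball m v j)"

(* An infinite, connected, locally finite multigraph without loops, with a distinguished root v.
   Infinitude enters only through the existence of vertices at every distance from v. *)
locale rooted_graph =
  fixes m :: "nat \<Rightarrow> nat \<Rightarrow> nat" and v :: nat
  assumes ok: "multigraph_ok m"
begin

lemma sym: "m x y = m y x"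
  using ok unfolding multigraph_ok_def by blast

lemma no_loop: "m x x = 0"
  using ok unfolding multigraph_ok_def by blast

lemma finite_nbrs: "finite (nbrs m x)"
  using ok unfolding multigraph_ok_def nbrs_def by blast

lemma connected: "(x, y) \<in> {(a, b). 0 < m a b}\<^sup>*"
  using ok unfolding multigraph_ok_def by blast

lemma deg_nbrs: "deg m x = (\<Sum>y\<in>nbrs m x. m x y)"
  unfolding deg_def nbrs_def by simp

(* Every vertex has a neighbour (the graph is connected and has more than one vertex). *)
lemma deg_pos: "0 < deg m x"
proof -
  have "(x, Suc x) \<in> {(a, b). 0 < m a b}\<^sup>*" by (rule connected)
  then obtain y where y: "0 < m x y" by (cases rule: converse_rtranclE) auto
  have "m x y \<le> deg m x" unfolding deg_nbrs
    by (rule member_le_sum) (use y finite_nbrs in \<open>auto simp: nbrs_def\<close>)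
  with y show ?thesis by simp
qed

lemma step_prob_nonneg: "0 \<le> step_prob m x y"
  unfolding step_prob_def by simp

lemma step_prob_sum: "(\<Sum>y\<in>nbrs m x. step_prob m x y) = 1"
proof -
  have "real (deg m x) = (\<Sum>y\<in>nbrs m x. real (m x y))" by (simp add: deg_nbrs)
  then show ?thesis using deg_pos[of x] unfolding step_prob_def by (simp flip: sum_divide_distrib)
qed

lemma finite_ball: "finite (graph_ball m v n)"
  by (induction n) (auto simp: finite_nbrs)

lemma ball_mono: "i \<le> j \<Longrightarrow> graph_ball m v i \<subseteq> graph_ball m v j"
  by (induction j) (auto simp: le_Suc_eq)

lemma root_in_ball: "v \<in> graph_ball m v n"
  by (induction n) auto

lemma nbr_in_ball: "x \<in> graph_ball m v n \<Longrightarrow> 0 < m x y \<Longrightarrow> y \<in> graph_ball m v (Suc n)"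
  by (auto simp: nbrs_def)

(* Balls are finite but the graph is infinite, so every sphere is nonempty. *)
lemma boundary_vertex: obtains y where "y \<notin> graph_ball m v n" and "y \<in> graph_ball m v (Suc n)"
proof -
  obtain z where z: "z \<notin> graph_ball m v n"
    using finite_ball[of n] by (metis ex_new_if_finite infinite_UNIV_nat)
  have "(v, z) \<in> {(a, b). 0 < m a b}\<^sup>*" by (rule connected)
  then have "z \<in> graph_ball m v n \<or> (\<exists>y. y \<notin> graph_ball m v n \<and> y \<in> graph_ball m v (Suc n))"
    by (induction rule: rtrancl_induct) (auto simp: root_in_ball nbrs_def)
  with z that show ?thesis by blast
qed

lemma geodesic_to_boundary:
  assumes "y \<notin> graph_ball m v n" and "y \<in> graph_ball m v (Suc n)"
  shows "\<exists>p. geodesic m v n p \<and> p (Suc n) = y"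
  using assms
proof (induction n arbitrary: y)
  case 0
  then have "0 < m v y" by (auto simp: nbrs_def)
  then show ?case using 0
    by (intro exI[of _ "\<lambda>j. if j = 0 then v else y"]) (auto simp: geodesic_def le_Suc_eq)
next
  case (Suc n)
  then obtain x where x: "x \<in> graph_ball m v (Suc n)" "0 < m x y" by (auto simp: nbrs_def)
  have "x \<notin> graph_ball m v n" using x Suc.prems(1) by (auto simp: nbrs_def)
  with Suc.IH x(1) obtain p where p: "geodesic m v n p" "p (Suc n) = x" by blast
  have "geodesic m v (Suc n) (p(Suc (Suc n) := y))"
    using p x Suc.prems unfolding geodesic_def by (auto simp: le_Suc_eq)
  then show ?case by auto
qed

lemma geodesic_exists: obtains p where "geodesic m v n p"
  using boundary_vertex[of n] geodesic_to_boundary by blast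

lemma geodesic_inj:
  assumes p: "geodesic m v n p"
  shows "inj_on p {..Suc n}"
proof -
  have "p i \<noteq> p j" if "i < j" "j \<le> Suc n" for i j
  proof -
    obtain j' where j': "j = Suc j'" using \<open>i < j\<close> by (cases j) auto
    have "p i \<in> graph_ball m v j'"
      using p that ball_mono[of i j'] j' unfolding geodesic_def by auto
    moreover have "p j \<notin> graph_ball m v j'" using p that j' unfolding geodesic_def by auto
    ultimately show ?thesis by auto
  qed
  then show ?thesis unfolding inj_on_def by (metis atMost_iff linorder_neqE_nat order.strict_trans2 less_imp_le)
qed

end

definition walks :: "(nat \<Rightarrow> nat \<Rightarrow> nat) \<Rightarrow> nat \<Rightarrow> nat \<Rightarrow> (nat \<Rightarrow> nat \<Rightarrow> bool) \<Rightarrow> nat list set" where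
  "walks m n x g = {xs. length xs = Suc n \<and> xs!0 = x \<and> is_walk m xs \<and> (\<forall>i\<le>n. g i (xs!i))}"

definition walk_weight :: "(nat \<Rightarrow> nat \<Rightarrow> nat) \<Rightarrow> nat \<Rightarrow> nat \<Rightarrow> (nat \<Rightarrow> nat \<Rightarrow> bool) \<Rightarrow> real" where
  "walk_weight m n x g = (\<Sum>xs\<in>walks m n x g. walk_prob m xs)"

lemma walks_0: "walks m 0 x g = (if g 0 x then {[x]} else {})"
  unfolding walks_def is_walk_def by (auto simp: length_Suc_conv)

lemma is_walk_Cons: "ys \<noteq> [] \<Longrightarrow> is_walk m (x # ys) \<longleftrightarrow> 0 < m x (ys!0) \<and> is_walk m ys"
  unfolding is_walk_def by (auto simp: nth_Cons split: nat.splits)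

lemma walk_prob_Cons: "ys \<noteq> [] \<Longrightarrow> walk_prob m (x # ys) = step_prob m x (ys!0) * walk_prob m ys"
  unfolding walk_prob_def step_prob_def
  by (auto simp: neq_Nil_conv prod.lessThan_Suc_shift simp del: prod.lessThan_Suc)

lemma walks_Suc:
  "walks m (Suc n) x g =
     (if g 0 x then (\<lambda>(y, ys). x # ys) ` (SIGMA y:nbrs m x. walks m n y (\<lambda>i. g (Suc i))) else {})"
proof (cases "g 0 x")
  case True
  have "walks m (Suc n) x g \<subseteq> (\<lambda>(y, ys). x # ys) ` (SIGMA y:nbrs m x. walks m n y (\<lambda>i. g (Suc i)))"
  proof
    fix xs assume xs: "xs \<in> walks m (Suc n) x g"
    obtain a ys where ys: "xs = a # ys" "length ys = Suc n"
      using xs unfolding walks_def by (auto simp: length_Suc_conv)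
    then have "ys \<noteq> []" by auto
    then have "a = x" "0 < m x (ys!0)" "is_walk m ys" "\<forall>i\<le>n. g (Suc i) (ys!i)"
      using xs ys unfolding walks_def by (auto simp: is_walk_Cons)
    then show "xs \<in> (\<lambda>(y, ys). x # ys) ` (SIGMA y:nbrs m x. walks m n y (\<lambda>i. g (Suc i)))"
      using ys by (intro image_eqI[of _ _ "(ys!0, ys)"]) (auto simp: walks_def nbrs_def)
  qed
  moreover have "(\<lambda>(y, ys). x # ys) ` (SIGMA y:nbrs m x. walks m n y (\<lambda>i. g (Suc i))) \<subseteq> walks m (Suc n) x g"
  proof clarify
    fix y ys assume y: "y \<in> nbrs m x" and ys: "ys \<in> walks m n y (\<lambda>i. g (Suc i))"
    have "ys \<noteq> []" using ys unfolding walks_def by auto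
    then show "x # ys \<in> walks m (Suc n) x g" using y ys True unfolding walks_def nbrs_def
      by (auto simp: is_walk_Cons nth_Cons split: nat.splits)
  qed
  ultimately show ?thesis using True by auto
qed (auto simp: walks_def)

context rooted_graph
begin

lemma finite_walks: "finite (walks m n x g)"
  by (induction n arbitrary: x g) (simp_all add: walks_0 walks_Suc finite_nbrs)

lemma walk_weight_0: "walk_weight m 0 x g = (if g 0 x then 1 else 0)"
  unfolding walk_weight_def walks_0 by (simp add: walk_prob_def)

lemma walk_weight_Suc:
  "walk_weight m (Suc n) x g =
     (if g 0 x then (\<Sum>y\<in>nbrs m x. step_prob m x y * walk_weight m n y (\<lambda>i. g (Suc i))) else 0)"
proof (cases "g 0 x")
  case True
  let ?S = "SIGMA y:nbrs m x. walks m n y (\<lambda>i. g (Suc i))"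
  have inj: "inj_on (\<lambda>(y, ys). x # ys) ?S"
    by (rule inj_onI) (auto simp: walks_def)
  have "walk_weight m (Suc n) x g = (\<Sum>(y, ys)\<in>?S. walk_prob m (x # ys))"
    unfolding walk_weight_def walks_Suc using True sum.reindex[OF inj, of "walk_prob m"]
    by (simp add: case_prod_unfold)
  also have "\<dots> = (\<Sum>y\<in>nbrs m x. \<Sum>ys\<in>walks m n y (\<lambda>i. g (Suc i)). step_prob m x y * walk_prob m ys)"
  proof (subst sum.Sigma)
    show "(\<Sum>(y, ys)\<in>?S. walk_prob m (x # ys)) = (\<Sum>(y, ys)\<in>?S. step_prob m x y * walk_prob m ys)"
      by (rule sum.cong) (auto simp: walks_def intro!: walk_prob_Cons)
  qed (auto simp: finite_nbrs finite_walks)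
  also have "\<dots> = (\<Sum>y\<in>nbrs m x. step_prob m x y * walk_weight m n y (\<lambda>i. g (Suc i)))"
    by (simp add: walk_weight_def sum_distrib_left)
  finally show ?thesis using True by simp
qed (simp add: walk_weight_def walks_Suc)

end

(* The transition operator of the walk killed at v, and its iterates applied to the indicator of
   v and of its complement: first_hit m v n x = P_x(first visit to v at time n) and
   survival m v n x = P_x(no visit to v at times 0, ..., n). *)
definition killed_op :: "(nat \<Rightarrow> nat \<Rightarrow> nat) \<Rightarrow> nat \<Rightarrow> (nat \<Rightarrow> real) \<Rightarrow> nat \<Rightarrow> real" where
  "killed_op m v f x = (if x = v then 0 else (\<Sum>y\<in>nbrs m x. step_prob m x y * f y))"

fun first_hit :: "(nat \<Rightarrow> nat \<Rightarrow> nat) \<Rightarrow> nat \<Rightarrow> nat \<Rightarrow> nat \<Rightarrow> real" where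
  "first_hit m v 0 = (\<lambda>x. if x = v then 1 else 0)"
| "first_hit m v (Suc n) = killed_op m v (first_hit m v n)"

fun survival :: "(nat \<Rightarrow> nat \<Rightarrow> nat) \<Rightarrow> nat \<Rightarrow> nat \<Rightarrow> nat \<Rightarrow> real" where
  "survival m v 0 = (\<lambda>x. if x = v then 0 else 1)"
| "survival m v (Suc n) = killed_op m v (survival m v n)"

context rooted_graph
begin

lemma first_hit_walks: "first_hit m v n x = walk_weight m n x (\<lambda>i u. i = n \<longleftrightarrow> u = v)"
  by (induction n arbitrary: x) (auto simp: walk_weight_0 walk_weight_Suc killed_op_def)

lemma survival_walks: "survival m v n x = walk_weight m n x (\<lambda>i u. u \<noteq> v)"
  by (induction n arbitrary: x) (auto simp: walk_weight_0 walk_weight_Suc killed_op_def)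

lemma prob_ret_ge_survival:
  "prob_ret_ge m v (Suc (Suc n)) = (\<Sum>y\<in>nbrs m v. step_prob m v y * survival m v n y)"
proof -
  have "prob_ret_ge m v (Suc (Suc n)) = walk_weight m (Suc n) v (\<lambda>i u. i = 0 \<longleftrightarrow> u = v)"
    unfolding prob_ret_ge_def walk_weight_def walks_def
    by (intro sum.cong Collect_cong conj_cong refl) (metis One_nat_def le_simps(3) less_one not_less)
  then show ?thesis by (simp add: walk_weight_Suc survival_walks)
qed

lemma prob_ret_eq_first_hit:
  "prob_ret_eq m v (Suc n) = (\<Sum>y\<in>nbrs m v. step_prob m v y * first_hit m v n y)"
proof -
  have "prob_ret_eq m v (Suc n) = walk_weight m (Suc n) v (\<lambda>i u. i = 0 \<or> i = Suc n \<longleftrightarrow> u = v)"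
    unfolding prob_ret_eq_def walk_weight_def walks_def
  proof (intro sum.cong Collect_cong conj_cong refl iffI)
    fix xs :: "nat list" assume xs0: "xs ! 0 = v"
    show "\<forall>i\<le>Suc n. (i = 0 \<or> i = Suc n) = (xs!i = v)"
      if "(\<forall>i. 1 \<le> i \<and> i < Suc n \<longrightarrow> xs!i \<noteq> v) \<and> xs!Suc n = v"
      using that xs0 by (metis One_nat_def le_neq_implies_less less_one not_less)
    show "(\<forall>i. 1 \<le> i \<and> i < Suc n \<longrightarrow> xs!i \<noteq> v) \<and> xs!Suc n = v"
      if "\<forall>i\<le>Suc n. (i = 0 \<or> i = Suc n) = (xs!i = v)"
      using that by (metis One_nat_def Suc_le_D Zero_not_Suc less_irrefl_nat less_or_eq_imp_le)
  qed
  then show ?thesis by (simp add: walk_weight_Suc first_hit_walks)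
qed

lemma killed_op_add: "killed_op m v (\<lambda>y. f y + g y) x = killed_op m v f x + killed_op m v g x"
  unfolding killed_op_def by (simp add: distrib_left sum.distrib)

lemma killed_op_const: "killed_op m v (\<lambda>y. 1) x = (if x = v then 0 else 1)"
  unfolding killed_op_def by (simp add: step_prob_sum)

lemma killed_op_nonneg: "(\<And>y. 0 \<le> f y) \<Longrightarrow> 0 \<le> killed_op m v f x"
  unfolding killed_op_def by (auto intro!: sum_nonneg mult_nonneg_nonneg step_prob_nonneg)

lemma killed_op_le_one: "(\<And>y. f y \<le> 1) \<Longrightarrow> killed_op m v f x \<le> 1"
proof -
  assume "\<And>y. f y \<le> 1"
  then have "(\<Sum>y\<in>nbrs m x. step_prob m x y * f y) \<le> (\<Sum>y\<in>nbrs m x. step_prob m x y)"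
    by (intro sum_mono) (simp add: mult_left_le step_prob_nonneg)
  then show ?thesis unfolding killed_op_def by (simp add: step_prob_sum)
qed

lemma killed_op_support:
  assumes "killed_op m v f x \<noteq> killed_op m v (\<lambda>_. c) x"
  obtains y where "0 < m x y" and "f y \<noteq> c"
proof -
  have "(\<Sum>y\<in>nbrs m x. step_prob m x y * f y) \<noteq> (\<Sum>y\<in>nbrs m x. step_prob m x y * c)"
    using assms unfolding killed_op_def by (auto split: if_splits)
  then obtain y where "y \<in> nbrs m x" "f y \<noteq> c" by (metis (no_types, lifting) sum.cong)
  then show ?thesis using that by (simp add: nbrs_def)
qed

lemma first_hit_nonneg: "0 \<le> first_hit m v n x"
  by (induction n arbitrary: x) (simp_all add: killed_op_nonneg)

lemma survival_nonneg: "0 \<le> survival m v n x"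
  by (induction n arbitrary: x) (simp_all add: killed_op_nonneg)

lemma survival_le_one: "survival m v n x \<le> 1"
  by (induction n arbitrary: x) (simp_all add: killed_op_le_one)

lemma survival_split: "survival m v n x = survival m v (Suc n) x + first_hit m v (Suc n) x"
proof (induction n arbitrary: x)
  case 0
  have "survival m v 0 y + first_hit m v 0 y = 1" for y by simp
  then show ?case using killed_op_const[of x] killed_op_add[of "survival m v 0" "first_hit m v 0" x]
    by simp
next
  case (Suc n)
  have IH: "survival m v n = (\<lambda>y. survival m v (Suc n) y + first_hit m v (Suc n) y)"
    using Suc.IH by (rule ext)
  have "survival m v (Suc n) x = killed_op m v (survival m v n) x" by simp
  also have "\<dots> = killed_op m v (survival m v (Suc n)) x + killed_op m v (first_hit m v (Suc n)) x"
    unfolding IH by (rule killed_op_add)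
  also have "\<dots> = survival m v (Suc (Suc n)) x + first_hit m v (Suc (Suc n)) x" by simp
  finally show ?case .
qed

lemma first_hit_le_one: "first_hit m v (Suc n) x \<le> 1"
  using survival_split[of n x] survival_le_one[of n x] survival_nonneg[of "Suc n" x] by linarith

lemma first_hit_support: "first_hit m v n x \<noteq> 0 \<Longrightarrow> x \<in> graph_ball m v n"
proof (induction n arbitrary: x)
  case (Suc n)
  then have "killed_op m v (first_hit m v n) x \<noteq> killed_op m v (\<lambda>_. 0) x"
    by (simp add: killed_op_def split: if_splits)
  then obtain y where "0 < m x y" "first_hit m v n y \<noteq> 0" by (rule killed_op_support)
  then show ?case using Suc.IH nbr_in_ball[of y n x] sym[of x y] by simp
qed (simp split: if_splits)

lemma survival_support: "survival m v n x \<noteq> 1 \<Longrightarrow> x \<in> graph_ball m v n"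
proof (induction n arbitrary: x)
  case (Suc n)
  show ?case
  proof (cases "x = v")
    case False
    then have "killed_op m v (survival m v n) x \<noteq> killed_op m v (\<lambda>_. 1) x"
      using Suc.prems killed_op_const[of x] by simp
    then obtain y where "0 < m x y" "survival m v n y \<noteq> 1" by (rule killed_op_support)
    then show ?thesis using Suc.IH nbr_in_ball[of y n x] sym[of x y] by simp
  qed (simp add: root_in_ball)
qed (simp add: root_in_ball split: if_splits)

end

(* The inner product weighted by the stationary measure deg, restricted to a finite set B
   containing the supports of the functions involved. *)
definition dinner :: "(nat \<Rightarrow> nat \<Rightarrow> nat) \<Rightarrow> nat set \<Rightarrow> (nat \<Rightarrow> real) \<Rightarrow> (nat \<Rightarrow> real) \<Rightarrow> real" where
  "dinner m B f g = (\<Sum>x\<in>B. real (deg m x) * f x * g x)"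

lemma dinner_commute: "dinner m B f g = dinner m B g f"
  unfolding dinner_def by (simp add: mult_ac)

lemma dinner_cauchy_schwarz: "(dinner m B f g)\<^sup>2 \<le> dinner m B f f * dinner m B g g"
proof -
  let ?a = "\<lambda>x. sqrt (real (deg m x)) * f x" and ?b = "\<lambda>x. sqrt (real (deg m x)) * g x"
  have "(\<Sum>x\<in>B. ?a x * ?b x)\<^sup>2 \<le> (\<Sum>x\<in>B. (?a x)\<^sup>2) * (\<Sum>x\<in>B. (?b x)\<^sup>2)"
    by (rule Cauchy_Schwarz_ineq_sum)
  then show ?thesis unfolding dinner_def by (simp add: power2_eq_square mult_ac)
qed

context rooted_graph
begin

lemma deg_killed_op:
  "real (deg m x) * killed_op m v f x = (if x = v then 0 else (\<Sum>y\<in>nbrs m x. real (m x y) * f y))"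
  using deg_pos[of x] by (simp add: killed_op_def step_prob_def sum_distrib_left)

lemma sum_nbrs_eq_sum_set:
  assumes "finite B" and "\<And>y. f y \<noteq> 0 \<Longrightarrow> y \<in> B"
  shows "(\<Sum>y\<in>nbrs m x. real (m x y) * f y) = (\<Sum>y\<in>B. real (m x y) * f y)"
  by (rule sum.mono_neutral_cong) (use assms finite_nbrs in \<open>auto simp: nbrs_def\<close>)

lemma dinner_killed_op:
  assumes "finite B" and "\<And>y. f y \<noteq> 0 \<Longrightarrow> y \<in> B" and "g v = 0"
  shows "dinner m B g (killed_op m v f) = (\<Sum>x\<in>B. \<Sum>y\<in>B. g x * real (m x y) * f y)"
  unfolding dinner_def
proof (rule sum.cong)
  fix x
  have "real (deg m x) * g x * killed_op m v f x = g x * (real (deg m x) * killed_op m v f x)"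
    by simp
  also have "\<dots> = g x * (\<Sum>y\<in>B. real (m x y) * f y)"
    using assms by (simp add: deg_killed_op sum_nbrs_eq_sum_set)
  finally show "real (deg m x) * g x * killed_op m v f x = (\<Sum>y\<in>B. g x * real (m x y) * f y)"
    by (simp add: sum_distrib_left mult.assoc)
qed simp

lemma killed_op_self_adjoint:
  assumes "finite B" and "\<And>y. f y \<noteq> 0 \<Longrightarrow> y \<in> B" and "\<And>y. g y \<noteq> 0 \<Longrightarrow> y \<in> B"
    and "f v = 0" and "g v = 0"
  shows "dinner m B g (killed_op m v f) = dinner m B (killed_op m v g) f"
proof -
  have "dinner m B g (killed_op m v f) = (\<Sum>x\<in>B. \<Sum>y\<in>B. g x * real (m x y) * f y)"
    using assms by (intro dinner_killed_op)
  also have "\<dots> = (\<Sum>y\<in>B. \<Sum>x\<in>B. f y * real (m y x) * g x)"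
    by (subst sum.swap) (simp add: sym mult_ac)
  also have "\<dots> = dinner m B f (killed_op m v g)"
    using assms by (intro dinner_killed_op[symmetric])
  finally show ?thesis by (simp add: dinner_commute)
qed

(* K is a contraction for dinner, by Cauchy-Schwarz against the transition probabilities. *)
lemma killed_op_contraction:
  assumes "finite B" and "\<And>y. f y \<noteq> 0 \<Longrightarrow> y \<in> B"
  shows "dinner m B (killed_op m v f) (killed_op m v f) \<le> dinner m B f f"
proof -
  have row: "real (deg m x) * killed_op m v f x * killed_op m v f x \<le> (\<Sum>y\<in>B. real (m x y) * (f y * f y))"
    for x
  proof (cases "x = v")
    case False
    have "(\<Sum>y\<in>nbrs m x. step_prob m x y * f y)\<^sup>2
        \<le> (\<Sum>y\<in>nbrs m x. step_prob m x y) * (\<Sum>y\<in>nbrs m x. step_prob m x y * (f y * f y))"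
      using Cauchy_Schwarz_ineq_sum[of "\<lambda>y. sqrt (step_prob m x y)" "\<lambda>y. sqrt (step_prob m x y) * f y"]
      by (simp add: power2_eq_square step_prob_nonneg mult_ac)
    then have "real (deg m x) * (killed_op m v f x)\<^sup>2 \<le> real (deg m x) * (\<Sum>y\<in>nbrs m x. step_prob m x y * (f y * f y))"
      using False by (intro mult_left_mono) (simp_all add: killed_op_def step_prob_sum)
    also have "\<dots> = (\<Sum>y\<in>B. real (m x y) * (f y * f y))"
      using deg_killed_op[of x "\<lambda>y. f y * f y"] False assms(2)
        sum_nbrs_eq_sum_set[OF assms(1), of "\<lambda>y. f y * f y"]
      by (simp add: killed_op_def)
    finally show ?thesis by (simp add: power2_eq_square mult.assoc)
  qed (simp add: killed_op_def sum_nonneg)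
  have "dinner m B (killed_op m v f) (killed_op m v f) \<le> (\<Sum>x\<in>B. \<Sum>y\<in>B. real (m x y) * (f y * f y))"
    unfolding dinner_def by (rule sum_mono) (rule row)
  also have "\<dots> = (\<Sum>y\<in>B. (f y * f y) * (\<Sum>x\<in>B. real (m y x)))"
    by (subst sum.swap) (simp add: sum_distrib_left sym mult_ac)
  also have "\<dots> \<le> dinner m B f f"
    unfolding dinner_def
  proof (rule sum_mono)
    fix y
    have "(\<Sum>x\<in>B. real (m y x)) = (\<Sum>x\<in>B \<inter> nbrs m y. real (m y x))"
      by (rule sum.mono_neutral_right) (use assms in \<open>auto simp: nbrs_def\<close>)
    also have "\<dots> \<le> real (deg m y)"
      unfolding deg_nbrs of_nat_sum by (rule sum_mono2) (use finite_nbrs in auto)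
    finally have "(\<Sum>x\<in>B. real (m y x)) \<le> real (deg m y)" .
    from mult_left_mono[OF this zero_le_square[of "f y"]]
    show "f y * f y * (\<Sum>x\<in>B. real (m y x)) \<le> real (deg m y) * f y * f y"
      by (simp add: mult_ac)
  qed
  finally show ?thesis .
qed

end

(* Up to the common factor deg v, return_mass n = P_v(\<tau>_v = n + 2) and
   survival_mass n = P_v(\<tau>_v \<ge> n + 2). *)
definition return_mass :: "(nat \<Rightarrow> nat \<Rightarrow> nat) \<Rightarrow> nat \<Rightarrow> nat \<Rightarrow> real" where
  "return_mass m v n = (\<Sum>y\<in>nbrs m v. real (m v y) * first_hit m v (Suc n) y)"

definition survival_mass :: "(nat \<Rightarrow> nat \<Rightarrow> nat) \<Rightarrow> nat \<Rightarrow> nat \<Rightarrow> real" where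
  "survival_mass m v n = (\<Sum>y\<in>nbrs m v. real (m v y) * survival m v n y)"

context rooted_graph
begin

lemma return_ratio_eq:
  "prob_ret_eq m v (Suc (Suc n)) / prob_ret_ge m v (Suc (Suc n)) = return_mass m v n / survival_mass m v n"
proof -
  have "prob_ret_eq m v (Suc (Suc n)) = return_mass m v n / real (deg m v)"
    unfolding prob_ret_eq_first_hit return_mass_def step_prob_def by (simp add: sum_divide_distrib)
  moreover have "prob_ret_ge m v (Suc (Suc n)) = survival_mass m v n / real (deg m v)"
    unfolding prob_ret_ge_survival survival_mass_def step_prob_def by (simp add: sum_divide_distrib)
  ultimately show ?thesis using deg_pos[of v] by simp
qed

lemma no_return_at_one: "prob_ret_eq m v 1 = 0"
  using prob_ret_eq_first_hit[of 0] no_loop[of v] by (auto simp: nbrs_def intro!: sum.neutral)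

lemma return_mass_nonneg: "0 \<le> return_mass m v n"
  unfolding return_mass_def
  by (intro sum_nonneg mult_nonneg_nonneg) (simp_all add: first_hit_nonneg del: first_hit.simps)

lemma return_mass_le_deg: "return_mass m v n \<le> real (deg m v)"
proof -
  have "return_mass m v n \<le> (\<Sum>y\<in>nbrs m v. real (m v y))"
    unfolding return_mass_def by (intro sum_mono mult_left_le first_hit_le_one) simp
  then show ?thesis by (simp add: deg_nbrs)
qed

lemma survival_mass_nonneg: "0 \<le> survival_mass m v n"
  unfolding survival_mass_def
  by (intro sum_nonneg mult_nonneg_nonneg) (simp_all add: survival_nonneg del: survival.simps)

lemma survival_mass_step: "survival_mass m v n = survival_mass m v (Suc n) + return_mass m v n"
  unfolding survival_mass_def return_mass_def
  by (subst survival_split) (simp add: distrib_left sum.distrib)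

lemma first_hit_in_ball: "Suc a \<le> R \<Longrightarrow> first_hit m v (Suc a) x \<noteq> 0 \<Longrightarrow> x \<in> graph_ball m v R"
  using first_hit_support ball_mono by blast

lemma deg_first_hit_one: "real (deg m x) * first_hit m v (Suc 0) x = real (m v x)"
proof (cases "x = v")
  case False
  have "real (deg m x) * first_hit m v (Suc 0) x = (\<Sum>y\<in>nbrs m x. if y = v then real (m x y) else 0)"
    using deg_killed_op[of x "first_hit m v 0"] False by (simp add: if_distrib cong: if_cong)
  also have "\<dots> = real (m v x)"
    using finite_nbrs[of x] sym[of x v] by (simp add: nbrs_def)
  finally show ?thesis .
qed (simp add: no_loop killed_op_def)

(* Spectral representation: return_mass (a + b) is the inner product of the first-hitting
   profiles at times a + 1 and b + 1; proved by moving one killed step at a time between the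
   two factors using self-adjointness. *)
lemma return_mass_dinner:
  "a + b = n \<Longrightarrow> n + 2 \<le> R \<Longrightarrow>
   dinner m (graph_ball m v R) (first_hit m v (Suc a)) (first_hit m v (Suc b)) = return_mass m v n"
proof (induction a arbitrary: b)
  case 0
  have "dinner m (graph_ball m v R) (first_hit m v (Suc 0)) (first_hit m v (Suc b))
      = (\<Sum>x\<in>graph_ball m v R. real (m v x) * first_hit m v (Suc b) x)"
    unfolding dinner_def deg_first_hit_one[symmetric] by (simp add: mult.assoc)
  also have "\<dots> = return_mass m v b"
    unfolding return_mass_def using 0 first_hit_in_ball[of b R]
    by (intro sum_nbrs_eq_sum_set[symmetric] finite_ball) auto
  finally show ?case using 0 by simp
next
  case (Suc a)
  let ?B = "graph_ball m v R" and ?f = "first_hit m v (Suc a)" and ?g = "first_hit m v (Suc b)"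
  have "dinner m ?B (first_hit m v (Suc (Suc a))) ?g = dinner m ?B ?g (killed_op m v ?f)"
    by (simp only: first_hit.simps(2) dinner_commute)
  also have "\<dots> = dinner m ?B (killed_op m v ?g) ?f"
    using Suc.prems first_hit_in_ball[of a R] first_hit_in_ball[of b R]
    by (intro killed_op_self_adjoint) (auto simp: finite_ball killed_op_def)
  also have "\<dots> = return_mass m v n"
    using Suc.prems Suc.IH[of "Suc b"] by (simp only: first_hit.simps(2) dinner_commute)
  finally show ?case .
qed

(* The three structural properties of return_mass required by ratio_bound_log_convex:
   even terms are squared norms of K^j applied to a fixed vector, hence nonincreasing (contraction)
   and log-convex (Cauchy-Schwarz); odd terms are inner products of consecutive iterates. *)
lemma return_mass_even_noninc: "return_mass m v (2*j+2) \<le> return_mass m v (2*j)"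
proof -
  let ?B = "graph_ball m v (2*j+4)" and ?f = "first_hit m v (Suc j)"
  have "return_mass m v (2*j+2) = dinner m ?B (killed_op m v ?f) (killed_op m v ?f)"
    using return_mass_dinner[of "Suc j" "Suc j" "2*j+2" "2*j+4"] by (simp only: first_hit.simps(2))
  also have "\<dots> \<le> dinner m ?B ?f ?f"
    using first_hit_in_ball[of j "2*j+4"] by (intro killed_op_contraction finite_ball) simp
  also have "\<dots> = return_mass m v (2*j)"
    by (rule return_mass_dinner) simp_all
  finally show ?thesis .
qed

lemma return_mass_even_log_convex:
  "(return_mass m v (2*j+2))\<^sup>2 \<le> return_mass m v (2*j) * return_mass m v (2*j+4)"
proof -
  let ?B = "graph_ball m v (2*j+6)" and ?f = "first_hit m v (Suc j)" and ?g = "first_hit m v (Suc (j+2))"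
  have "return_mass m v (2*j+2) = dinner m ?B ?f ?g"
    and "return_mass m v (2*j) = dinner m ?B ?f ?f"
    and "return_mass m v (2*j+4) = dinner m ?B ?g ?g"
    by (rule return_mass_dinner[symmetric]; simp)+
  then show ?thesis using dinner_cauchy_schwarz by simp
qed

lemma return_mass_odd_le_even: "return_mass m v (2*j+1) \<le> return_mass m v (2*j)"
proof -
  let ?B = "graph_ball m v (2*j+4)" and ?f = "first_hit m v (Suc j)" and ?g = "first_hit m v (Suc (j+1))"
  have "return_mass m v (2*j+1) = dinner m ?B ?f ?g"
    and "return_mass m v (2*j) = dinner m ?B ?f ?f"
    and "return_mass m v (2*j+2) = dinner m ?B ?g ?g"
    by (rule return_mass_dinner[symmetric]; simp)+
  then have "(return_mass m v (2*j+1))\<^sup>2 \<le> return_mass m v (2*j) * return_mass m v (2*j+2)"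
    using dinner_cauchy_schwarz by simp
  also have "\<dots> \<le> (return_mass m v (2*j))\<^sup>2"
    using return_mass_even_noninc[of j] return_mass_nonneg[of "2*j"]
    by (simp add: power2_eq_square mult_left_mono)
  finally show ?thesis using return_mass_nonneg[of "2*j"] by (rule power2_le_imp_le)
qed

end

definition energy :: "(nat \<Rightarrow> nat \<Rightarrow> nat) \<Rightarrow> nat set \<Rightarrow> (nat \<Rightarrow> real) \<Rightarrow> real" where
  "energy m B f = (\<Sum>x\<in>B. \<Sum>y\<in>B. real (m x y) * (f x - f y)\<^sup>2)"

lemma energy_path_lower:
  assumes "finite B" and edges: "\<And>j. j < N \<Longrightarrow> 0 < m (p j) (p (Suc j))"
    and in_B: "\<And>j. j \<le> N \<Longrightarrow> p j \<in> B" and inj: "inj_on p {..N}"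
  shows "(f (p 0) - f (p N))\<^sup>2 \<le> real N * energy m B f"
proof -
  define d where "d j = f (p j) - f (p (Suc j))" for j
  have "f (p 0) - f (p N) = (\<Sum>j<N. d j)"
    unfolding d_def by (rule sum_lessThan_telescope'[symmetric])
  also have "(\<Sum>j<N. d j)\<^sup>2 \<le> (\<Sum>j<N. (d j)\<^sup>2) * real N"
    using Cauchy_Schwarz_ineq_sum[of d "\<lambda>_. 1" "{..<N}"] by simp
  finally have cs: "(f (p 0) - f (p N))\<^sup>2 \<le> (\<Sum>j<N. (d j)\<^sup>2) * real N" .
  let ?edge = "\<lambda>j. (p j, p (Suc j))"
  have inj_edge: "inj_on ?edge {..<N}"
    using inj by (auto simp: inj_on_def)
  have "(\<Sum>j<N. (d j)\<^sup>2) = (\<Sum>(x, y)\<in>?edge ` {..<N}. (f x - f y)\<^sup>2)"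
    by (simp add: sum.reindex[OF inj_edge] d_def)
  also have "\<dots> \<le> (\<Sum>(x, y)\<in>?edge ` {..<N}. real (m x y) * (f x - f y)\<^sup>2)"
  proof (rule sum_mono)
    fix e assume "e \<in> ?edge ` {..<N}"
    then obtain j where "j < N" "e = ?edge j" by auto
    then have "1 \<le> real (m (fst e) (snd e))" using edges by fastforce
    then show "(case e of (x, y) \<Rightarrow> (f x - f y)\<^sup>2) \<le> (case e of (x, y) \<Rightarrow> real (m x y) * (f x - f y)\<^sup>2)"
      by (auto simp: mult_le_cancel_right1 split: prod.splits)
  qed
  also have "\<dots> \<le> (\<Sum>(x, y)\<in>B \<times> B. real (m x y) * (f x - f y)\<^sup>2)"
    using assms(1) in_B by (intro sum_mono2) auto
  also have "\<dots> = energy m B f"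
    unfolding energy_def by (simp add: sum.cartesian_product)
  finally have "(\<Sum>j<N. (d j)\<^sup>2) * real N \<le> energy m B f * real N"
    by (rule mult_right_mono) simp
  then show ?thesis using cs by (simp add: mult.commute)
qed

definition hit_prob :: "(nat \<Rightarrow> nat \<Rightarrow> nat) \<Rightarrow> nat \<Rightarrow> nat \<Rightarrow> nat \<Rightarrow> real" where
  "hit_prob m v n x = 1 - survival m v n x"

context rooted_graph
begin

lemma energy_green:
  assumes "finite B" and supp: "\<And>x. f x \<noteq> 0 \<Longrightarrow> x \<in> B \<and> nbrs m x \<subseteq> B"
  shows "energy m B f = 2 * (\<Sum>x\<in>B. f x * (real (deg m x) * f x - (\<Sum>y\<in>nbrs m x. real (m x y) * f y)))"
proof -
  have row: "(\<Sum>y\<in>B. real (m x y) * g y) = (\<Sum>y\<in>nbrs m x. real (m x y) * g y)"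
    if "f x \<noteq> 0" for x g
    using that supp finite_nbrs[of x] assms(1)
    by (intro sum.mono_neutral_right) (auto simp: nbrs_def)
  have deg_row: "(\<Sum>y\<in>B. real (m x y)) * (f x * f x) = real (deg m x) * (f x * f x)" for x
    using row[of x "\<lambda>_. 1"] by (cases "f x = 0") (simp_all add: deg_nbrs)
  have "energy m B f = (\<Sum>x\<in>B. \<Sum>y\<in>B. real (m x y) * (f x * f x))
      + (\<Sum>x\<in>B. \<Sum>y\<in>B. real (m x y) * (f y * f y)) - 2 * (\<Sum>x\<in>B. \<Sum>y\<in>B. real (m x y) * f x * f y)"
    unfolding energy_def
    by (simp add: power2_eq_square algebra_simps sum.distrib sum_subtractf sum_distrib_left)
  also have "(\<Sum>x\<in>B. \<Sum>y\<in>B. real (m x y) * (f y * f y)) = (\<Sum>x\<in>B. \<Sum>y\<in>B. real (m x y) * (f x * f x))"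
    by (subst sum.swap) (simp add: sym)
  also have "(\<Sum>x\<in>B. \<Sum>y\<in>B. real (m x y) * (f x * f x)) = (\<Sum>x\<in>B. real (deg m x) * (f x * f x))"
    by (rule sum.cong[OF refl]) (simp only: deg_row flip: sum_distrib_right)
  also have "(\<Sum>x\<in>B. \<Sum>y\<in>B. real (m x y) * f x * f y) = (\<Sum>x\<in>B. f x * (\<Sum>y\<in>nbrs m x. real (m x y) * f y))"
  proof (rule sum.cong[OF refl])
    fix x
    have "(\<Sum>y\<in>B. real (m x y) * f x * f y) = f x * (\<Sum>y\<in>B. real (m x y) * f y)"
      by (simp add: sum_distrib_left mult_ac)
    also have "\<dots> = f x * (\<Sum>y\<in>nbrs m x. real (m x y) * f y)"
      using row[of x f] by (cases "f x = 0") simp_all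
    finally show "(\<Sum>y\<in>B. real (m x y) * f x * f y) = f x * (\<Sum>y\<in>nbrs m x. real (m x y) * f y)" .
  qed
  finally show ?thesis by (simp add: algebra_simps sum_subtractf sum_distrib_left sum.distrib)
qed

lemma survival_root: "survival m v n v = 0"
  by (cases n) (simp_all add: killed_op_def)

lemma hit_prob_support: "hit_prob m v n x \<noteq> 0 \<Longrightarrow> x \<in> graph_ball m v n"
  unfolding hit_prob_def using survival_support by simp

lemma hit_prob_root: "hit_prob m v n v = 1"
  by (simp add: hit_prob_def survival_root)

(* hit_prob is subharmonic away from v and its Laplacian at v is survival_mass n, so its energy
   is at most 2 survival_mass n. *)
lemma energy_hit_prob: "energy m (graph_ball m v (Suc n)) (hit_prob m v n) \<le> 2 * survival_mass m v n"
proof -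
  let ?B = "graph_ball m v (Suc n)" and ?w = "hit_prob m v n"
  define D where "D x = real (deg m x) * ?w x - (\<Sum>y\<in>nbrs m x. real (m x y) * ?w y)" for x
  have nbr_sum: "(\<Sum>y\<in>nbrs m x. real (m x y) * ?w y)
      = real (deg m x) - (\<Sum>y\<in>nbrs m x. real (m x y) * survival m v n y)" for x
    by (simp add: hit_prob_def deg_nbrs algebra_simps sum_subtractf)
  have D_root: "D v = survival_mass m v n"
    unfolding D_def nbr_sum survival_mass_def by (simp add: hit_prob_root)
  have D_nonpos: "D x \<le> 0" if "x \<noteq> v" for x
  proof -
    have "D x = real (deg m x) * (survival m v (Suc n) x - survival m v n x)"
      unfolding D_def nbr_sum using deg_killed_op[of x "survival m v n"] that
      by (simp add: hit_prob_def algebra_simps)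
    also have "\<dots> \<le> 0"
      using survival_split[of n x] first_hit_nonneg[of "Suc n" x] by (simp add: mult_nonneg_nonpos)
    finally show ?thesis .
  qed
  have "energy m ?B ?w = 2 * (\<Sum>x\<in>?B. ?w x * D x)"
    unfolding D_def using hit_prob_support ball_mono[of n "Suc n"] nbr_in_ball
    by (intro energy_green finite_ball) (auto simp: nbrs_def)
  also have "(\<Sum>x\<in>?B. ?w x * D x) = ?w v * D v + (\<Sum>x\<in>?B - {v}. ?w x * D x)"
    by (intro sum.remove finite_ball root_in_ball)
  also have "(\<Sum>x\<in>?B - {v}. ?w x * D x) \<le> 0"
    using D_nonpos survival_le_one unfolding hit_prob_def
    by (intro sum_nonpos) (simp add: mult_nonneg_nonpos)
  finally show ?thesis using D_root by (simp add: hit_prob_root)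
qed

(* A priori lower bound: hit_prob drops from 1 at v to 0 along a geodesic of length n + 1,
   so P_v(\<tau>_v \<ge> n + 2) \<ge> 1 / (2 deg v (n + 1)). *)
lemma survival_mass_lower: "1 / (2 * real (Suc n)) \<le> survival_mass m v n"
proof -
  obtain p where p: "geodesic m v n p" by (rule geodesic_exists)
  have far: "hit_prob m v n (p (Suc n)) = 0"
    using p hit_prob_support unfolding geodesic_def by blast
  have "(hit_prob m v n (p 0) - hit_prob m v n (p (Suc n)))\<^sup>2
      \<le> real (Suc n) * energy m (graph_ball m v (Suc n)) (hit_prob m v n)"
  proof (rule energy_path_lower[OF finite_ball])
    show "p j \<in> graph_ball m v (Suc n)" if "j \<le> Suc n" for j
      using p that ball_mono[of j "Suc n"] unfolding geodesic_def by blast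
  qed (use p geodesic_inj in \<open>auto simp: geodesic_def\<close>)
  also have "\<dots> \<le> real (Suc n) * (2 * survival_mass m v n)"
    by (intro mult_left_mono energy_hit_prob) simp
  finally have "1 \<le> 2 * real (Suc n) * survival_mass m v n"
    using p far unfolding geodesic_def by (simp add: hit_prob_root algebra_simps)
  then show ?thesis by (simp add: field_simps)
qed

end

(* The main theorem, with the constant C = 100. For t = 1 the walk cannot return (no loops); for t = n + 2
   the conditional probability equals return_mass n / survival_mass n, to which the abstract
   bound applies. *)
theorem theorem1p2:
  shows "\<exists>C::real. \<forall>(m :: nat \<Rightarrow> nat \<Rightarrow> nat) (v::nat) (t::nat).
           multigraph_ok m \<and> 1 \<le> t \<longrightarrow>
           prob_ret_eq m v t / prob_ret_ge m v t \<le> C * ln (real (deg m v) * real t) / real t"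
proof (intro exI[of _ 100] allI impI, elim conjE)
  fix m :: "nat \<Rightarrow> nat \<Rightarrow> nat" and v t :: nat
  assume "multigraph_ok m" and t: "1 \<le> t"
  then interpret rooted_graph m v by unfold_locales
  have d: "1 \<le> real (deg m v)" using deg_pos[of v] by simp
  show "prob_ret_eq m v t / prob_ret_ge m v t \<le> 100 * ln (real (deg m v) * real t) / real t"
  proof (cases "t = 1")
    case True
    then show ?thesis using no_return_at_one d by simp
  next
    case False
    define n where "n = t - 2"
    have n: "t = n + 2" using t False unfolding n_def by arith
    have "return_mass m v n / survival_mass m v n \<le> 100 * ln (real (deg m v) * real (n + 2)) / real (n + 2)"
      using return_mass_nonneg return_mass_even_noninc return_mass_even_log_convex
        return_mass_odd_le_even return_mass_le_deg d survival_mass_step survival_mass_nonneg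
        survival_mass_lower
      by (rule ratio_bound_log_convex)
    then show ?thesis using return_ratio_eq[of n] n by simp
  qed
qed

end
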